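(* Let $0 \le \alpha \le \beta < \infty$ with $\alpha + \beta > 0$, and let $\varphi\colon \mathbb{R} \to \mathbb{R}$ satisfy $\alpha \le \frac{\varphi(a) - \varphi(b)}{a - b} \le \beta$ for all $a \neq b$. Let $\phi\colon \mathbb{R}^{n_1} \to \mathbb{R}^{n_1}$, $\phi(v) = (\varphi(v_1),\dots,\varphi(v_{n_1}))$. Let $W \in \mathbb{R}^{n_1 \times n_0}$, $\rho > 0$, and let $T \in \mathbb{R}^{n_1 \times n_1}$ be diagonal and positive definite, such that $$W W^\top \preceq \frac{2\rho}{(\alpha+\beta)^2}\, T^{-1}.$$ Then the map $h\colon \mathbb{R}^{n_0} \to \mathbb{R}^{n_0}$, $$h(x) = \sqrt{\rho}\, x - \frac{\alpha+\beta}{\sqrt{\rho}}\, W^\top T\, \phi(Wx),$$ satisfies $\|h(x) - h(x')\|_2 \le \sqrt{\rho}\,\|x - x'\|_2$ for all $x, x' \in \mathbb{R}^{n_0}$.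
   Context: $\preceq$ denotes the Loewner (positive semidefinite) order on symmetric matrices. *)

theory Defs
  imports "HOL-Analysis.Analysis"
begin

definition diagonal_mat :: "real^'n^'n \<Rightarrow> bool" where
  "diagonal_mat T \<longleftrightarrow> (\<forall>i j. i \<noteq> j \<longrightarrow> T $ i $ j = 0)"

definition pos_def_mat :: "real^'n^'n \<Rightarrow> bool" where
  "pos_def_mat T \<longleftrightarrow> transpose T = T \<and> (\<forall>v. v \<noteq> 0 \<longrightarrow> v \<bullet> (T *v v) > 0)"

definition loewner_le :: "real^'n^'n \<Rightarrow> real^'n^'n \<Rightarrow> bool" where
  "loewner_le A B \<longleftrightarrow> transpose A = A \<and> transpose B = B \<and>
     (\<forall>v. v \<bullet> ((B - A) *v v) \<ge> 0)"

definition vec_map :: "(real \<Rightarrow> real) \<Rightarrow> real^'n \<Rightarrow> real^'n" where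
  "vec_map f v = (\<chi> i. f (v $ i))"

end

theory Submission
  imports Defs
begin

text \<open>Write \<open>d = x - x'\<close>, \<open>u = W d\<close>, \<open>\<delta> = \<phi>(W x) - \<phi>(W x')\<close> and \<open>c = \<alpha> + \<beta>\<close>. Expanding the square,
  \<open>\<parallel>h x - h x'\<parallel>\<^sup>2 = \<rho>\<parallel>d\<parallel>\<^sup>2 - 2c\<langle>u, T\<delta>\<rangle> + (c\<^sup>2/\<rho>)\<parallel>W\<^sup>T T\<delta>\<parallel>\<^sup>2\<close>.
  The Loewner bound on \<open>W W\<^sup>T\<close>, tested against \<open>T\<delta>\<close>, bounds the last term by \<open>2\<langle>\<delta>, T\<delta>\<rangle>\<close>.
  The slope restriction gives the sector condition \<open>(\<delta>\<^sub>i - \<alpha>u\<^sub>i)(\<delta>\<^sub>i - \<beta>u\<^sub>i) \<le> 0\<close>, hence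
  \<open>\<delta>\<^sub>i(\<delta>\<^sub>i - c u\<^sub>i) \<le> -\<alpha>\<beta>u\<^sub>i\<^sup>2 \<le> 0\<close>; weighting by the positive diagonal of \<open>T\<close> yields
  \<open>\<langle>\<delta>, T\<delta>\<rangle> \<le> c\<langle>u, T\<delta>\<rangle>\<close>, so the cross terms cancel the excess.\<close>

lemma sector_condition:
  fixes \<phi> :: "real \<Rightarrow> real"
  assumes "\<And>a b. a \<noteq> b \<Longrightarrow> \<alpha> \<le> (\<phi> a - \<phi> b) / (a - b) \<and> (\<phi> a - \<phi> b) / (a - b) \<le> \<beta>"
  shows "(\<phi> a - \<phi> b - \<alpha> * (a - b)) * (\<phi> a - \<phi> b - \<beta> * (a - b)) \<le> 0"
proof (cases "a = b")
  case False
  define q where "q = (\<phi> a - \<phi> b) / (a - b)"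
  have "(q - \<alpha>) * (q - \<beta>) \<le> 0"
    using assms[OF False] unfolding q_def[symmetric] by (simp add: mult_nonneg_nonpos)
  then have "(a - b)\<^sup>2 * ((q - \<alpha>) * (q - \<beta>)) \<le> 0"
    by (simp add: mult_nonneg_nonpos)
  also have "(a - b)\<^sup>2 * ((q - \<alpha>) * (q - \<beta>))
      = (q * (a - b) - \<alpha> * (a - b)) * (q * (a - b) - \<beta> * (a - b))"
    by (simp add: algebra_simps power2_eq_square)
  also have "q * (a - b) = \<phi> a - \<phi> b"
    using False by (simp add: q_def)
  finally show ?thesis .
qed simp

lemma diagonal_mat_mult_vector:
  fixes T :: "real^'n^'n"
  assumes "diagonal_mat T"
  shows "(T *v v) $ i = T $ i $ i * v $ i"
proof -
  have "(T *v v) $ i = (\<Sum>j\<in>UNIV. T $ i $ j * v $ j)"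
    by (simp add: matrix_vector_mult_def)
  also have "\<dots> = (\<Sum>j\<in>UNIV. if j = i then T $ i $ i * v $ i else 0)"
    by (rule sum.cong) (use assms in \<open>auto simp: diagonal_mat_def\<close>)
  finally show ?thesis by simp
qed

lemma inner_diagonal_mat_mult_vector:
  fixes T :: "real^'n^'n"
  assumes "diagonal_mat T"
  shows "u \<bullet> (T *v v) = (\<Sum>i\<in>UNIV. T $ i $ i * (u $ i * v $ i))"
  by (simp add: inner_vec_def diagonal_mat_mult_vector[OF assms] algebra_simps)

lemma pos_def_mat_diagonal_pos:
  fixes T :: "real^'n^'n"
  assumes "pos_def_mat T"
  shows "T $ i $ i > 0"
proof -
  have "axis i 1 \<bullet> (T *v axis i 1) > 0"
    using assms by (auto simp: pos_def_mat_def axis_eq_0_iff)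
  moreover have "axis i 1 \<bullet> (T *v axis i 1) = T $ i $ i"
    by (simp add: inner_axis' matrix_vector_mult_basis column_def)
  ultimately show ?thesis by simp
qed

lemma pos_def_mat_inv_cancel:
  fixes T :: "real^'n^'n"
  assumes "pos_def_mat T"
  shows "matrix_inv T *v (T *v v) = v"
proof -
  have "\<forall>x. T *v x = 0 \<longrightarrow> x = 0"
    using assms by (force simp: pos_def_mat_def)
  then have "invertible T"
    using matrix_left_invertible_ker invertible_left_inverse by blast
  then have "T ** matrix_inv T = mat 1 \<and> matrix_inv T ** T = mat 1"
    unfolding invertible_def matrix_inv_def by (rule someI_ex)
  then show ?thesis by (simp add: matrix_vector_mul_assoc)
qed

lemma loewner_le_quadratic_form:
  fixes A B :: "real^'n^'n"
  assumes "loewner_le A B"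
  shows "v \<bullet> (A *v v) \<le> v \<bullet> (B *v v)"
  using assms by (simp add: loewner_le_def matrix_vector_mult_diff_rdistrib inner_diff_right)

lemma inner_transpose_mult_vector:
  fixes W :: "real^'m^'n"
  shows "(transpose W *v y) \<bullet> (transpose W *v y) = y \<bullet> ((W ** transpose W) *v y)"
  by (metis dot_lmul_matrix vector_transpose_matrix matrix_vector_mul_assoc inner_commute)

lemma weighted_sector_sum:
  fixes T :: "real^'n^'n"
  assumes "diagonal_mat T" and "\<And>i. T $ i $ i \<ge> 0"
    and "\<And>i. \<delta> $ i * (\<delta> $ i - c * u $ i) \<le> 0"
  shows "\<delta> \<bullet> (T *v \<delta>) \<le> c * (u \<bullet> (T *v \<delta>))"
proof -
  have "\<delta> \<bullet> (T *v \<delta>) - c * (u \<bullet> (T *v \<delta>)) = (\<Sum>i\<in>UNIV. T $ i $ i * (\<delta> $ i * (\<delta> $ i - c * u $ i)))"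
    by (simp add: inner_diagonal_mat_mult_vector[OF assms(1)] sum_distrib_left
        sum_subtractf[symmetric] algebra_simps)
  also have "\<dots> \<le> 0"
    using assms(2,3) by (intro sum_nonpos) (simp add: mult_nonneg_nonpos)
  finally show ?thesis by simp
qed

text \<open>Here \<open>g\<close> plays \<open>W\<^sup>T T\<delta>\<close> and \<open>s\<close> plays \<open>\<langle>\<delta>, T\<delta>\<rangle>\<close>.\<close>

lemma norm_gradient_step_le:
  fixes d g :: "'a::real_inner"
  assumes "r > 0" and "c > 0"
    and "g \<bullet> g \<le> (2 * r\<^sup>2 / c\<^sup>2) * s" and "s \<le> c * (d \<bullet> g)"
  shows "norm (r *\<^sub>R d - (c / r) *\<^sub>R g) \<le> r * norm d"
proof -
  let ?a = "r *\<^sub>R d" and ?b = "(c / r) *\<^sub>R g"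
  have "(norm ?b)\<^sup>2 = (c / r)\<^sup>2 * (g \<bullet> g)"
    by (simp add: power_divide power_mult_distrib power2_norm_eq_inner[symmetric])
  also have "\<dots> \<le> (c / r)\<^sup>2 * ((2 * r\<^sup>2 / c\<^sup>2) * s)"
    using assms(3) by (intro mult_left_mono) auto
  also have "\<dots> = 2 * s"
    using assms(1,2) by (simp add: power_divide)
  finally have "(norm ?b)\<^sup>2 \<le> 2 * s" .
  moreover have "?a \<bullet> ?b = c * (d \<bullet> g)"
    using assms(1) by simp
  moreover have "(norm (?a - ?b))\<^sup>2 = (norm ?a)\<^sup>2 - 2 * (?a \<bullet> ?b) + (norm ?b)\<^sup>2"
    using dot_norm_neg[of ?a ?b] by simp
  ultimately have "(norm (?a - ?b))\<^sup>2 \<le> (norm ?a)\<^sup>2"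
    using assms(4) by linarith
  then have "norm (?a - ?b) \<le> norm ?a"
    by (rule power2_le_imp_le) simp
  then show ?thesis
    using assms(1) by simp
qed

theorem proposition2:
  fixes \<alpha> \<beta> \<rho> :: real and \<phi> :: "real \<Rightarrow> real"
    and W :: "real^'n0^'n1" and T :: "real^'n1^'n1"
  assumes "0 \<le> \<alpha>" and "\<alpha> \<le> \<beta>" and "\<alpha> + \<beta> > 0"
    and "\<And>a b. a \<noteq> b \<Longrightarrow> \<alpha> \<le> (\<phi> a - \<phi> b) / (a - b) \<and> (\<phi> a - \<phi> b) / (a - b) \<le> \<beta>"
    and "\<rho> > 0"
    and "diagonal_mat T" and "pos_def_mat T"
    and "loewner_le (W ** transpose W) ((2 * \<rho> / (\<alpha> + \<beta>)^2) *\<^sub>R matrix_inv T)"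
  shows "\<forall>x x' :: real^'n0.
     norm ((sqrt \<rho> *\<^sub>R x - ((\<alpha> + \<beta>) / sqrt \<rho>) *\<^sub>R (transpose W ** T) *v vec_map \<phi> (W *v x))
         - (sqrt \<rho> *\<^sub>R x' - ((\<alpha> + \<beta>) / sqrt \<rho>) *\<^sub>R (transpose W ** T) *v vec_map \<phi> (W *v x')))
     \<le> sqrt \<rho> * norm (x - x')"
proof (intro allI)
  fix x x' :: "real^'n0"
  define \<delta> where "\<delta> = vec_map \<phi> (W *v x) - vec_map \<phi> (W *v x')"
  define u where "u = W *v (x - x')"
  have sector: "\<delta> $ i * (\<delta> $ i - (\<alpha> + \<beta>) * u $ i) \<le> 0" for i
  proof -
    have "(\<delta> $ i - \<alpha> * u $ i) * (\<delta> $ i - \<beta> * u $ i) \<le> 0"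
      using sector_condition[OF assms(4)]
      by (simp add: \<delta>_def u_def vec_map_def matrix_vector_mult_diff_distrib)
    moreover have "0 \<le> \<alpha> * \<beta> * (u $ i)\<^sup>2"
      using assms(1,2) by simp
    ultimately show ?thesis
      by (simp add: algebra_simps power2_eq_square)
  qed
  have "(transpose W *v (T *v \<delta>)) \<bullet> (transpose W *v (T *v \<delta>))
      \<le> (2 * (sqrt \<rho>)\<^sup>2 / (\<alpha> + \<beta>)\<^sup>2) * (\<delta> \<bullet> (T *v \<delta>))"
    unfolding inner_transpose_mult_vector
    using loewner_le_quadratic_form[OF assms(8), of "T *v \<delta>"] assms(5)
    by (simp add: scaleR_matrix_vector_assoc[symmetric]
        pos_def_mat_inv_cancel[OF assms(7)] inner_commute)
  moreover have "\<delta> \<bullet> (T *v \<delta>) \<le> (\<alpha> + \<beta>) * ((x - x') \<bullet> (transpose W *v (T *v \<delta>)))"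
    using weighted_sector_sum[OF assms(6) _ sector] pos_def_mat_diagonal_pos[OF assms(7)]
    by (simp add: u_def less_imp_le dot_lmul_matrix[symmetric] inner_commute)
  ultimately have "norm (sqrt \<rho> *\<^sub>R (x - x') - ((\<alpha> + \<beta>) / sqrt \<rho>) *\<^sub>R (transpose W *v (T *v \<delta>)))
      \<le> sqrt \<rho> * norm (x - x')"
    using assms(3,5) by (intro norm_gradient_step_le) auto
  then show "norm ((sqrt \<rho> *\<^sub>R x - ((\<alpha> + \<beta>) / sqrt \<rho>) *\<^sub>R (transpose W ** T) *v vec_map \<phi> (W *v x))
         - (sqrt \<rho> *\<^sub>R x' - ((\<alpha> + \<beta>) / sqrt \<rho>) *\<^sub>R (transpose W ** T) *v vec_map \<phi> (W *v x')))
     \<le> sqrt \<rho> * norm (x - x')"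
    by (simp add: \<delta>_def matrix_vector_mul_assoc scaleR_matrix_vector_assoc[symmetric]
        matrix_vector_mult_diff_distrib algebra_simps)
qed

end
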